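(* Let $n\ge2$, let $A\in\mathbb{R}^{n\times n}$ be Metzler, output unstable and nonsingular, $b_0\in\mathbb{R}^n_{\ge0}$ with $g_0:=-e_n^TA^{-1}b_0<0$, and let $\mu,\theta>0$, $r:=\mu/\theta$, $g_n:=-e_n^TA^{-1}e_n$, $u_*:=(g_0-r)/(g_nr)$. Then for all $\eta,k_p>0$ the equilibrium $\big(-A^{-1}(b_0-ru_*e_n),\ \mu/(\eta u_* ),\ u_*/k_p\big)$ of the system $\dot x=Ax-k_px_nz_2e_n+b_0$, $\dot z_1=\mu-k_p\eta z_1z_2$, $\dot z_2=\theta x_n-k_p\eta z_1z_2$ is locally exponentially stable.
   Context: $S:=[e_1\ \cdots\ e_{n-1}]$, $e_i$ standard basis vectors; $x_n=e_n^Tx$. Metzler: all off-diagonal entries nonnegative. Hurwitz stable: all eigenvalues have negative real part. $M$ is output unstable if $S^TMS$ is Hurwitz stable and $e_n^TMe_n>0$. An equilibrium is called locally exponentially stable here if the Jacobian matrix of the vector field at the equilibrium is Hurwitz stable. *)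

theory Defs
  imports "HOL-Analysis.Analysis" "Jordan_Normal_Form.Matrix" "Jordan_Normal_Form.Char_Poly"
begin

text \<open>Matrices/vectors of dimension n use Jordan_Normal_Form, indices 0..n-1;
  the paper's index n (e.g. e_n, x_n) is index n-1 here.\<close>

definition metzler :: "real mat \<Rightarrow> bool" where
  "metzler M \<longleftrightarrow> (\<forall>i<dim_row M. \<forall>j<dim_col M. i \<noteq> j \<longrightarrow> M $$ (i,j) \<ge> 0)"

definition hurwitz :: "real mat \<Rightarrow> bool" where
  "hurwitz M \<longleftrightarrow> (\<forall>k. eigenvalue (map_mat complex_of_real M) k \<longrightarrow> Re k < 0)"

definition S_mat :: "nat \<Rightarrow> real mat" where
  "S_mat n = mat n (n - 1) (\<lambda>(i,j). if i = j then 1 else 0)"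

definition output_unstable :: "real mat \<Rightarrow> bool" where
  "output_unstable M \<longleftrightarrow>
     (let n = dim_row M in
        hurwitz (transpose_mat (S_mat n) * M * S_mat n) \<and>
        unit_vec n (n - 1) \<bullet> (M *\<^sub>v unit_vec n (n - 1)) > 0)"

definition jacobian :: "nat \<Rightarrow> (real vec \<Rightarrow> real vec) \<Rightarrow> real vec \<Rightarrow> real mat" where
  "jacobian N F p = mat N N (\<lambda>(i,j). deriv (\<lambda>t. F (p + t \<cdot>\<^sub>v unit_vec N j) $ i) 0)"

definition loc_exp_stable :: "nat \<Rightarrow> (real vec \<Rightarrow> real vec) \<Rightarrow> real vec \<Rightarrow> bool" where
  "loc_exp_stable N F p \<longleftrightarrow> hurwitz (jacobian N F p)"

text \<open>The closed-loop vector field on states w = (x, z1, z2) in R^(n+2):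
  components 0..n-1 are x, component n is z1, component n+1 is z2.\<close>
definition closed_loop :: "nat \<Rightarrow> real mat \<Rightarrow> real vec \<Rightarrow> real \<Rightarrow> real \<Rightarrow> real \<Rightarrow> real \<Rightarrow> real vec \<Rightarrow> real vec" where
  "closed_loop n A b0 kp \<eta> \<mu> \<theta> w =
     (let x = vec n (\<lambda>i. w $ i); xn = w $ (n - 1); z1 = w $ n; z2 = w $ (n + 1);
          dx = A *\<^sub>v x - (kp * xn * z2) \<cdot>\<^sub>v unit_vec n (n - 1) + b0 in
      vec (n + 2) (\<lambda>i. if i < n then dx $ i
                        else if i = n then \<mu> - kp * \<eta> * z1 * z2
                        else \<theta> * xn - kp * \<eta> * z1 * z2))"

end

(*
  At the equilibrium the Jacobian is the linearised x-dynamics A - u e_n e_n^T, coupled to the two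
  controller states only through x_n. Suppose J v = l v with Re l >= 0. The first n - 1 rows say
  that (l - M) v' is a nonnegative multiple of x_n, where M = S^T A S is Metzler and Hurwitz, so
  -M^{-1} >= 0 entrywise, and a comparison argument bounds |v'| by |x_n| times the first n - 1
  entries of A^{-1} e_n / (A^{-1} e_n)_n. The x_n-row thus becomes a scalar loop perturbed by at
  most (1 / (A^{-1} e_n)_n - a_nn) |x_n|, which is less than the damping (u - a_nn) |x_n| because
  g_0 < 0. The controller closes this scalar loop through the positive-real transfer function
  (l + d) / (l (l + c + d)), whose real part is nonnegative for Re l >= 0; this contradicts the
  strictly positive real part of the remaining factor.
*)
theory Submission
  imports Defs "Jordan_Normal_Form.Spectral_Radius"
begin

unbundle no vec_syntax

lemma index_mult_mat_vec_sum:
  "A \<in> carrier_mat n m \<Longrightarrow> v \<in> carrier_vec m \<Longrightarrow> i < n \<Longrightarrow> (A *\<^sub>v v) $ i = (\<Sum>j<m. A $$ (i, j) * v $ j)"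
  by (auto simp: scalar_prod_def lessThan_atLeast0 intro!: sum.cong)

lemma eigenvalue_smult_mat:
  fixes A :: "'a :: field mat"
  assumes A: "A \<in> carrier_mat n n" and c: "c \<noteq> 0" and ev: "eigenvalue (c \<cdot>\<^sub>m A) k"
  shows "eigenvalue A (k / c)"
proof -
  obtain v where v: "v \<in> carrier_vec n" "v \<noteq> 0\<^sub>v n" and Av: "(c \<cdot>\<^sub>m A) *\<^sub>v v = k \<cdot>\<^sub>v v"
    using ev A unfolding eigenvalue_def eigenvector_def by auto
  have "A *\<^sub>v v = (k / c) \<cdot>\<^sub>v v"
  proof (rule eq_vecI)
    fix i assume "i < dim_vec ((k / c) \<cdot>\<^sub>v v)"
    then have i: "i < n" using v by simp
    have "c * (A *\<^sub>v v) $ i = k * v $ i"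
      using arg_cong[OF Av, of "\<lambda>w. w $ i"] i A v by (simp add: scalar_prod_smult_left)
    then show "(A *\<^sub>v v) $ i = ((k / c) \<cdot>\<^sub>v v) $ i"
      using c i v by (simp add: field_simps)
  qed (use A v in simp)
  then show ?thesis using A v unfolding eigenvalue_def eigenvector_def by auto
qed

lemma eigenvalue_add_smult_one_mat:
  fixes A :: "'a :: field mat"
  assumes A: "A \<in> carrier_mat n n" and ev: "eigenvalue (A + d \<cdot>\<^sub>m 1\<^sub>m n) k"
  shows "eigenvalue A (k - d)"
proof -
  obtain v where v: "v \<in> carrier_vec n" "v \<noteq> 0\<^sub>v n" and Av: "(A + d \<cdot>\<^sub>m 1\<^sub>m n) *\<^sub>v v = k \<cdot>\<^sub>v v"
    using ev A unfolding eigenvalue_def eigenvector_def by auto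
  have "A *\<^sub>v v = (k - d) \<cdot>\<^sub>v v"
  proof (rule eq_vecI)
    fix i assume "i < dim_vec ((k - d) \<cdot>\<^sub>v v)"
    then have i: "i < n" using v by simp
    have "(A *\<^sub>v v) $ i + d * v $ i = k * v $ i"
      using arg_cong[OF Av, of "\<lambda>w. w $ i"] i A v
      by (simp add: add_mult_distrib_mat_vec[of _ n n] index_mult_mat_vec_sum[of _ n n])
    then show "(A *\<^sub>v v) $ i = ((k - d) \<cdot>\<^sub>v v) $ i"
      using i v by (simp add: algebra_simps)
  qed (use A v in simp)
  then show ?thesis using A v unfolding eigenvalue_def eigenvector_def by auto
qed

section \<open>Nonnegative matrices\<close>

definition nonneg_mat :: "real mat \<Rightarrow> bool" where
  "nonneg_mat Q \<longleftrightarrow> (\<forall>i<dim_row Q. \<forall>j<dim_col Q. Q $$ (i, j) \<ge> 0)"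

lemma nonneg_mat_mult_vec_mono:
  assumes Q: "Q \<in> carrier_mat n m" "nonneg_mat Q"
    and y: "y \<in> carrier_vec m" and z: "z \<in> carrier_vec m" and yz: "\<forall>j<m. y $ j \<le> z $ j"
    and i: "i < n"
  shows "(Q *\<^sub>v y) $ i \<le> (Q *\<^sub>v z) $ i"
  using Q yz i unfolding index_mult_mat_vec_sum[OF Q(1) y i] index_mult_mat_vec_sum[OF Q(1) z i]
  by (auto simp: nonneg_mat_def intro!: sum_mono mult_left_mono)

lemma nonneg_mat_pow:
  assumes Q: "Q \<in> carrier_mat n n" "nonneg_mat Q"
  shows "nonneg_mat (Q ^\<^sub>m k)"
proof (induction k)
  case (Suc k)
  have "(Q ^\<^sub>m k * Q) $$ (i, j) \<ge> 0" if "i < n" "j < n" for i j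
    using Suc Q that
    by (auto simp: nonneg_mat_def scalar_prod_def intro!: sum_nonneg mult_nonneg_nonneg)
  then show ?case using Q by (simp add: nonneg_mat_def)
qed (use Q in \<open>simp add: nonneg_mat_def\<close>)

lemma nonneg_mat_pow_expanding:
  assumes Q: "Q \<in> carrier_mat n n" "nonneg_mat Q" and x: "x \<in> carrier_vec n" and t: "t \<ge> 0"
    and Qx: "\<forall>j<n. t * x $ j \<le> (Q *\<^sub>v x) $ j" and i: "i < n"
  shows "t ^ k * x $ i \<le> (Q ^\<^sub>m k *\<^sub>v x) $ i"
  using i
proof (induction k arbitrary: i)
  case (Suc k)
  have Qk: "Q ^\<^sub>m k \<in> carrier_mat n n" "nonneg_mat (Q ^\<^sub>m k)"
    using Q nonneg_mat_pow by auto
  have "t ^ Suc k * x $ i = t * (t ^ k * x $ i)" by simp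
  also have "\<dots> \<le> t * (Q ^\<^sub>m k *\<^sub>v x) $ i"
    using Suc t by (simp add: mult_left_mono)
  also have "\<dots> = (Q ^\<^sub>m k *\<^sub>v (t \<cdot>\<^sub>v x)) $ i"
    using Qk Q x Suc.prems by (simp add: mult_mat_vec)
  also have "\<dots> \<le> (Q ^\<^sub>m k *\<^sub>v (Q *\<^sub>v x)) $ i"
    using Qk Q x Qx Suc.prems by (intro nonneg_mat_mult_vec_mono[of _ n n]) auto
  also have "\<dots> = (Q ^\<^sub>m Suc k *\<^sub>v x) $ i"
    using assoc_mult_mat_vec[OF Qk(1) Q(1) x] by simp
  finally show ?case .
qed (use Q x in simp)

lemma nonneg_mat_expanding_eq_0:
  assumes Q: "Q \<in> carrier_mat n n" "nonneg_mat Q"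
    and \<rho>: "spectral_radius (map_mat complex_of_real Q) < 1"
    and x: "x \<in> carrier_vec n" "\<forall>j<n. x $ j \<ge> 0"
    and t: "t > 1" and Qx: "\<forall>j<n. t * x $ j \<le> (Q *\<^sub>v x) $ j" and i: "i < n"
  shows "x $ i = 0"
proof (rule ccontr)
  assume "x $ i \<noteq> 0"
  with x i have xi: "x $ i > 0" by force
  obtain c where c: "\<And>k. norm_bound (map_mat complex_of_real Q ^\<^sub>m k) c"
    using spectral_radius_jnf_norm_bound_less_1_upper_triangular[of _ n] Q \<rho> by fastforce
  have "t ^ k * x $ i \<le> c * (\<Sum>j<n. x $ j)" for k
  proof -
    have "t ^ k * x $ i \<le> (Q ^\<^sub>m k *\<^sub>v x) $ i"
      using nonneg_mat_pow_expanding[OF Q x(1) _ Qx i] t by simp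
    also have "\<dots> = (\<Sum>j<n. (Q ^\<^sub>m k) $$ (i, j) * x $ j)"
      using Q x i by (intro index_mult_mat_vec_sum) auto
    also have "\<dots> \<le> (\<Sum>j<n. c * x $ j)"
    proof (rule sum_mono)
      fix j assume j: "j \<in> {..<n}"
      have "norm_bound (map_mat complex_of_real (Q ^\<^sub>m k)) c"
        using c[of k] by (simp add: of_real_hom.mat_hom_pow[OF Q(1)])
      then have "\<bar>(Q ^\<^sub>m k) $$ (i, j)\<bar> \<le> c"
        using j i Q unfolding norm_bound_def by (auto dest!: spec[of _ i] spec[of _ j])
      then show "(Q ^\<^sub>m k) $$ (i, j) * x $ j \<le> c * x $ j"
        using x j by (simp add: mult_right_mono abs_le_iff)
    qed
    finally show ?thesis by (simp add: sum_distrib_left)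
  qed
  moreover obtain k where "c * (\<Sum>j<n. x $ j) / x $ i < t ^ k"
    using real_arch_pow[OF t] by blast
  ultimately show False using xi by (simp add: pos_divide_less_eq) (metis not_le)
qed

lemma spectral_radius_of_real_smult_less_1:
  assumes Q: "Q \<in> carrier_mat n n" and n: "n > 0"
    and \<tau>: "\<tau> > 0" "spectral_radius (map_mat complex_of_real Q) < \<tau>"
  shows "spectral_radius (map_mat complex_of_real ((1 / \<tau>) \<cdot>\<^sub>m Q)) < 1"
proof -
  define QC where "QC = map_mat complex_of_real Q"
  have QC: "QC \<in> carrier_mat n n" using Q by (simp add: QC_def)
  have RC: "map_mat complex_of_real ((1 / \<tau>) \<cdot>\<^sub>m Q) = complex_of_real (1 / \<tau>) \<cdot>\<^sub>m QC"
    by (rule eq_matI) (auto simp: QC_def)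
  have "cmod k < 1" if "eigenvalue (map_mat complex_of_real ((1 / \<tau>) \<cdot>\<^sub>m Q)) k" for k
  proof -
    have "eigenvalue QC (k * complex_of_real \<tau>)"
      using eigenvalue_smult_mat[OF QC, of "complex_of_real (1 / \<tau>)" k] that \<tau> by (simp add: RC)
    then have "cmod (k * complex_of_real \<tau>) \<le> spectral_radius QC"
      using spectral_radius_mem_max(2)[OF QC n] by (auto simp: spectrum_def)
    then have "\<tau> * cmod k \<le> spectral_radius QC"
      using \<tau> by (simp add: norm_mult mult.commute)
    then have "\<tau> * cmod k < \<tau> * 1"
      using \<tau>(2) unfolding QC_def by linarith
    then show ?thesis using mult_less_cancel_left_pos[OF \<tau>(1)] by blast
  qed
  then show ?thesis
    using spectral_radius_mem_max(1)[of "map_mat complex_of_real ((1 / \<tau>) \<cdot>\<^sub>m Q)" n] Q n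
    by (auto simp: spectrum_def)
qed

lemma nonneg_mat_subinvariant_eq_0:
  assumes Q: "Q \<in> carrier_mat n n" "nonneg_mat Q"
    and \<rho>: "spectral_radius (map_mat complex_of_real Q) < t"
    and x: "x \<in> carrier_vec n" "\<forall>j<n. x $ j \<ge> 0" and Qx: "\<forall>j<n. t * x $ j \<le> (Q *\<^sub>v x) $ j"
    and i: "i < n"
  shows "x $ i = 0"
proof -
  have "spectral_radius (map_mat complex_of_real Q) \<ge> 0"
    using spectral_radius_mem_max(1)[of "map_mat complex_of_real Q" n] Q i by auto
  then obtain \<tau> where \<tau>: "\<tau> > 0" "spectral_radius (map_mat complex_of_real Q) < \<tau>" "\<tau> < t"
    using \<rho> dense by (metis le_less_trans)
  show ?thesis
  proof (rule nonneg_mat_expanding_eq_0)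
    show "(1 / \<tau>) \<cdot>\<^sub>m Q \<in> carrier_mat n n" "nonneg_mat ((1 / \<tau>) \<cdot>\<^sub>m Q)"
      using Q \<tau> by (auto simp: nonneg_mat_def)
    show "spectral_radius (map_mat complex_of_real ((1 / \<tau>) \<cdot>\<^sub>m Q)) < 1"
      using spectral_radius_of_real_smult_less_1[OF Q(1) _ \<tau>(1,2)] i by simp
    show "\<forall>j<n. t / \<tau> * x $ j \<le> ((1 / \<tau>) \<cdot>\<^sub>m Q *\<^sub>v x) $ j"
      using Qx Q x \<tau> by (auto simp: divide_right_mono)
  qed (use x i \<tau> in auto)
qed

section \<open>Metzler Hurwitz matrices\<close>

lemma metzlerD:
  "metzler A \<Longrightarrow> A \<in> carrier_mat n n \<Longrightarrow> i < n \<Longrightarrow> j < n \<Longrightarrow> i \<noteq> j \<Longrightarrow> A $$ (i, j) \<ge> 0"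
  by (auto simp: metzler_def)

lemma cmod_real_shift_less:
  assumes "Re z < 0" and "cmod z ^ 2 < s * (- 2 * Re z)"
  shows "cmod (complex_of_real s + z) < s"
proof -
  have s: "s > 0"
    using assms by (smt (verit) mult_nonpos_nonneg zero_le_power2)
  have "cmod (complex_of_real s + z) ^ 2 = (s + Re z) ^ 2 + Im z ^ 2"
    by (simp add: cmod_power2)
  also have "\<dots> = s ^ 2 + 2 * s * Re z + cmod z ^ 2"
    using cmod_power2[of z] by (simp add: power2_eq_square algebra_simps)
  also have "\<dots> < s ^ 2" using assms(2) by (simp add: algebra_simps)
  finally show ?thesis using s by (simp add: power_less_imp_less_base)
qed

lemma hurwitz_shift_contracts:
  assumes M: "M \<in> carrier_mat n n" and hw: "hurwitz M"
  obtains s where "\<forall>j<n. 0 < M $$ (j, j) + s"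
    and "\<And>z. eigenvalue (map_mat complex_of_real M) z \<Longrightarrow> cmod (complex_of_real s + z) < s"
proof -
  define S where "S = spectrum (map_mat complex_of_real M)"
  have S: "finite S" "\<And>z. z \<in> S \<Longrightarrow> Re z < 0"
    using card_finite_spectrum(1)[of "map_mat complex_of_real M" n] M hw
    by (auto simp: hurwitz_def spectrum_def S_def)
  define s where "s = 1 + (\<Sum>z\<in>S. cmod z ^ 2 / (- 2 * Re z)) + (\<Sum>j<n. \<bar>M $$ (j, j)\<bar>)"
  have sums: "0 \<le> (\<Sum>z\<in>S. cmod z ^ 2 / (- 2 * Re z))" "0 \<le> (\<Sum>j<n. \<bar>M $$ (j, j)\<bar>)"
    using S by (auto intro!: sum_nonneg divide_nonneg_neg)
  show ?thesis
  proof
    show "\<forall>j<n. 0 < M $$ (j, j) + s"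
    proof (intro allI impI)
      fix j assume "j < n"
      then have "\<bar>M $$ (j, j)\<bar> \<le> (\<Sum>j<n. \<bar>M $$ (j, j)\<bar>)"
        by (intro member_le_sum) auto
      with sums show "0 < M $$ (j, j) + s" by (simp add: s_def)
    qed
  next
    fix z assume "eigenvalue (map_mat complex_of_real M) z"
    then have z: "z \<in> S" and Re: "Re z < 0" using S(2) by (auto simp: S_def spectrum_def)
    have "cmod z ^ 2 / (- 2 * Re z) \<le> (\<Sum>z\<in>S. cmod z ^ 2 / (- 2 * Re z))"
      using z S by (intro member_le_sum) (auto intro!: divide_nonneg_neg)
    with sums have "cmod z ^ 2 / (- 2 * Re z) < s" unfolding s_def by linarith
    then have "cmod z ^ 2 < s * (- 2 * Re z)"
      by (subst (asm) pos_divide_less_eq) (use Re in auto)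
    then show "cmod (complex_of_real s + z) < s"
      using Re by (rule cmod_real_shift_less[rotated])
  qed
qed

lemma metzler_hurwitz_supersolution_eq_0:
  assumes M: "M \<in> carrier_mat n n" and metz: "metzler M" and hw: "hurwitz M"
    and x: "x \<in> carrier_vec n" "\<forall>j<n. x $ j \<ge> 0" and Mx: "\<forall>j<n. (M *\<^sub>v x) $ j \<ge> 0"
    and i: "i < n"
  shows "x $ i = 0"
proof -
  obtain s where s_diag: "\<forall>j<n. 0 < M $$ (j, j) + s"
    and s_spec: "\<And>z. eigenvalue (map_mat complex_of_real M) z \<Longrightarrow> cmod (complex_of_real s + z) < s"
    using hurwitz_shift_contracts[OF M hw] by blast
  define Q where "Q = M + s \<cdot>\<^sub>m 1\<^sub>m n"
  have Q: "Q \<in> carrier_mat n n" "nonneg_mat Q"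
    using M metz s_diag by (auto simp: Q_def nonneg_mat_def metzler_def intro: less_imp_le)
  have "cmod k < s" if "eigenvalue (map_mat complex_of_real Q) k" for k
  proof -
    have "map_mat complex_of_real Q = map_mat complex_of_real M + complex_of_real s \<cdot>\<^sub>m 1\<^sub>m n"
      using M by (intro eq_matI) (auto simp: Q_def)
    then have "eigenvalue (map_mat complex_of_real M) (k - complex_of_real s)"
      using eigenvalue_add_smult_one_mat[of "map_mat complex_of_real M" n] M that by simp
    then show ?thesis using s_spec by fastforce
  qed
  then have "spectral_radius (map_mat complex_of_real Q) < s"
    using spectral_radius_mem_max(1)[of "map_mat complex_of_real Q" n] Q i by (auto simp: spectrum_def)
  moreover have "\<forall>j<n. s * x $ j \<le> (Q *\<^sub>v x) $ j"
    using M x Mx by (simp add: Q_def add_mult_distrib_mat_vec[of _ n n])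
  ultimately show ?thesis
    using nonneg_mat_subinvariant_eq_0[OF Q] x i by blast
qed

lemma metzler_hurwitz_comparison:
  assumes M: "M \<in> carrier_mat n n" and metz: "metzler M" and hw: "hurwitz M"
    and y: "y \<in> carrier_vec n" and My: "\<forall>j<n. (M *\<^sub>v y) $ j \<ge> 0" and i: "i < n"
  shows "y $ i \<le> 0"
proof -
  define x where "x = vec n (\<lambda>j. max (y $ j) 0)"
  have x: "x \<in> carrier_vec n" by (simp add: x_def)
  have "(M *\<^sub>v x) $ l \<ge> 0" if l: "l < n" for l
  proof (cases "y $ l > 0")
    case True
    have "M $$ (l, j) * y $ j \<le> M $$ (l, j) * x $ j" if j: "j < n" for j
    proof (cases "j = l")
      case True
      then show ?thesis using \<open>y $ l > 0\<close> j by (simp add: x_def)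
    next
      case False
      then show ?thesis using metzlerD[OF metz M l j] j by (intro mult_left_mono) (auto simp: x_def)
    qed
    then have "(M *\<^sub>v y) $ l \<le> (M *\<^sub>v x) $ l"
      unfolding index_mult_mat_vec_sum[OF M y l] index_mult_mat_vec_sum[OF M x l]
      by (intro sum_mono) auto
    then show ?thesis using My[rule_format, OF l] by linarith
  next
    case False
    have "M $$ (l, j) * x $ j \<ge> 0" if j: "j < n" for j
    proof (cases "j = l")
      case True
      then show ?thesis using False j by (simp add: x_def)
    next
      case False
      then show ?thesis using metzlerD[OF metz M l j] j by (simp add: x_def)
    qed
    then show ?thesis
      unfolding index_mult_mat_vec_sum[OF M x l] by (intro sum_nonneg) auto
  qed
  then have "x $ i = 0"
    using metzler_hurwitz_supersolution_eq_0[OF M metz hw x] i by (simp add: x_def)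
  then show ?thesis using i by (simp add: x_def)
qed

lemma metzler_row_abs_nonneg:
  fixes v :: "complex vec" and l f :: complex
  assumes off_diag: "\<forall>k<n. k \<noteq> i \<longrightarrow> M $$ (i, k) \<ge> 0" and i: "i < n" and l: "Re l \<ge> 0"
    and eq: "l * v $ i = (\<Sum>k<n. complex_of_real (M $$ (i, k)) * v $ k) + f"
  shows "0 \<le> (\<Sum>k<n. M $$ (i, k) * cmod (v $ k)) + cmod f"
proof -
  define T where "T = (\<Sum>k\<in>{..<n} - {i}. complex_of_real (M $$ (i, k)) * v $ k)"
  have split: "(\<Sum>k<n. g k) = g i + (\<Sum>k\<in>{..<n} - {i}. g k)" for g :: "nat \<Rightarrow> 'a :: comm_monoid_add"
    using i by (simp add: sum.remove)
  have "- M $$ (i, i) * cmod (v $ i) \<le> cmod (l - complex_of_real (M $$ (i, i))) * cmod (v $ i)"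
    using l complex_Re_le_cmod[of "l - complex_of_real (M $$ (i, i))"] by (intro mult_right_mono) auto
  also have "\<dots> = cmod (T + f)"
    using eq by (simp add: split T_def norm_mult[symmetric] algebra_simps)
  also have "\<dots> \<le> cmod T + cmod f" by (rule norm_triangle_ineq)
  also have "cmod T \<le> (\<Sum>k\<in>{..<n} - {i}. M $$ (i, k) * cmod (v $ k))"
    unfolding T_def using off_diag
    by (intro order.trans[OF norm_sum] sum_mono) (auto simp: norm_mult)
  finally show ?thesis by (simp add: split[of "\<lambda>k. M $$ (i, k) * cmod (v $ k)"])
qed

lemma metzler_hurwitz_resolvent_bound:
  fixes v :: "complex vec" and l X :: complex
  assumes M: "M \<in> carrier_mat n n" and metz: "metzler M" and hw: "hurwitz M"
    and p: "p \<in> carrier_vec n" and b: "\<forall>i<n. b $ i \<ge> 0" and Mp: "\<forall>i<n. (M *\<^sub>v p) $ i + b $ i = 0"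
    and l: "Re l \<ge> 0" and v: "v \<in> carrier_vec n"
    and eq: "\<forall>i<n. l * v $ i = (\<Sum>k<n. complex_of_real (M $$ (i, k)) * v $ k) + complex_of_real (b $ i) * X"
    and i: "i < n"
  shows "cmod (v $ i) \<le> p $ i * cmod X"
proof -
  define y where "y = vec n (\<lambda>k. cmod (v $ k) - p $ k * cmod X)"
  have y: "y \<in> carrier_vec n" by (simp add: y_def)
  have "(M *\<^sub>v y) $ j \<ge> 0" if j: "j < n" for j
  proof -
    have "(M *\<^sub>v y) $ j = (\<Sum>k<n. M $$ (j, k) * cmod (v $ k)) - cmod X * (M *\<^sub>v p) $ j"
      unfolding index_mult_mat_vec_sum[OF M y j] index_mult_mat_vec_sum[OF M p j]
      by (simp add: y_def algebra_simps sum_subtractf sum_distrib_left)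
    also have "\<dots> = (\<Sum>k<n. M $$ (j, k) * cmod (v $ k)) + cmod (complex_of_real (b $ j) * X)"
      using Mp b j by (simp add: norm_mult eq_neg_iff_add_eq_0[symmetric])
    also have "\<dots> \<ge> 0"
      using metz M j l eq by (intro metzler_row_abs_nonneg) (auto simp: metzler_def)
    finally show ?thesis .
  qed
  then show ?thesis
    using metzler_hurwitz_comparison[OF M metz hw y _ i] i by (simp add: y_def)
qed

section \<open>Output-unstable matrices\<close>

definition leading_block :: "'a mat \<Rightarrow> nat \<Rightarrow> 'a mat" where
  "leading_block A m = mat m m (\<lambda>(i, j). A $$ (i, j))"

lemma metzler_leading_block:
  assumes "A \<in> carrier_mat n n" "metzler A" "m \<le> n"
  shows "metzler (leading_block A m)"
  using assms by (auto simp: metzler_def leading_block_def)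

lemma S_mat_compression:
  assumes A: "A \<in> carrier_mat (Suc m) (Suc m)"
  shows "transpose_mat (S_mat (Suc m)) * A * S_mat (Suc m) = leading_block A m"
proof (rule eq_matI)
  fix i j assume "i < dim_row (leading_block A m)" "j < dim_col (leading_block A m)"
  then have i: "i < m" and j: "j < m" by (auto simp: leading_block_def)
  show "(transpose_mat (S_mat (Suc m)) * A * S_mat (Suc m)) $$ (i, j) = leading_block A m $$ (i, j)"
    using i j A
    by (simp add: S_mat_def leading_block_def scalar_prod_def if_distrib[of "\<lambda>x. _ * x"]
        if_distrib[of "\<lambda>x. x * _"] cong: if_cong)
qed (use A in \<open>auto simp: S_mat_def leading_block_def\<close>)

lemma output_unstableD:
  assumes A: "A \<in> carrier_mat (Suc m) (Suc m)" and ou: "output_unstable A"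
  shows "hurwitz (leading_block A m)" and "A $$ (m, m) > 0"
proof -
  show "hurwitz (leading_block A m)"
    using ou A by (simp add: output_unstable_def S_mat_compression)
  have "unit_vec (Suc m) m \<bullet> (A *\<^sub>v unit_vec (Suc m) m) = A $$ (m, m)"
    using A by simp
  then show "A $$ (m, m) > 0"
    using ou A by (simp add: output_unstable_def)
qed

lemma unit_vec_solution_row:
  assumes A: "A \<in> carrier_mat (Suc m) (Suc m)" and w: "w \<in> carrier_vec (Suc m)"
    and Aw: "A *\<^sub>v w = unit_vec (Suc m) m" and i: "i < Suc m"
  shows "(\<Sum>k<m. A $$ (i, k) * w $ k) + A $$ (i, m) * w $ m = (if i = m then 1 else 0)"
  using arg_cong[OF Aw, of "\<lambda>x. x $ i"] index_mult_mat_vec_sum[OF A w i] i by simp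

lemma output_unstable_inverse_last_pos:
  assumes A: "A \<in> carrier_mat (Suc m) (Suc m)" and metz: "metzler A" and ou: "output_unstable A"
    and w: "w \<in> carrier_vec (Suc m)" and Aw: "A *\<^sub>v w = unit_vec (Suc m) m"
  shows "w $ m > 0"
proof (rule ccontr)
  assume "\<not> w $ m > 0"
  then have wm: "w $ m \<le> 0" by simp
  note row = unit_vec_solution_row[OF A w Aw]
  define M where "M = leading_block A m"
  have M: "M \<in> carrier_mat m m" "metzler M" "hurwitz M"
    using metzler_leading_block[OF A metz] output_unstableD(1)[OF A ou] by (auto simp: M_def leading_block_def)
  define y where "y = vec m (\<lambda>k. w $ k)"
  have y: "y \<in> carrier_vec m" by (simp add: y_def)
  have "(M *\<^sub>v y) $ i \<ge> 0" if i: "i < m" for i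
  proof -
    have "(M *\<^sub>v y) $ i = - A $$ (i, m) * w $ m"
      unfolding index_mult_mat_vec_sum[OF M(1) y i]
      using row[of i] i by (simp add: M_def leading_block_def y_def eq_neg_iff_add_eq_0)
    also have "\<dots> \<ge> 0"
      using metzlerD[OF metz A, of i m] i wm by (simp add: mult_nonneg_nonpos)
    finally show ?thesis .
  qed
  then have "w $ k \<le> 0" if "k < m" for k
    using metzler_hurwitz_comparison[OF M y _ that] that by (simp add: y_def)
  then have "(\<Sum>k<m. A $$ (m, k) * w $ k) \<le> 0"
    using metzlerD[OF metz A] by (intro sum_nonpos mult_nonneg_nonpos) auto
  moreover have "A $$ (m, m) * w $ m \<le> 0"
    using output_unstableD(2)[OF A ou] wm by (simp add: mult_nonneg_nonpos)
  ultimately show False using row[of m] by simp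
qed

lemma output_unstable_eigen_bound:
  fixes v :: "complex vec" and l :: complex
  assumes A: "A \<in> carrier_mat (Suc m) (Suc m)" and metz: "metzler A" and ou: "output_unstable A"
    and w: "w \<in> carrier_vec (Suc m)" and Aw: "A *\<^sub>v w = unit_vec (Suc m) m" and l: "Re l \<ge> 0"
    and eq: "\<forall>i<m. l * v $ i = (\<Sum>k<Suc m. complex_of_real (A $$ (i, k)) * v $ k)"
    and k: "k < m"
  shows "cmod (v $ k) \<le> w $ k / w $ m * cmod (v $ m)"
proof -
  have wm: "w $ m > 0" by (rule output_unstable_inverse_last_pos[OF A metz ou w Aw])
  define M where "M = leading_block A m"
  have M: "M \<in> carrier_mat m m" "metzler M" "hurwitz M"
    using metzler_leading_block[OF A metz] output_unstableD(1)[OF A ou] by (auto simp: M_def leading_block_def)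
  define p b where "p = vec m (\<lambda>k. w $ k / w $ m)" and "b = vec m (\<lambda>i. A $$ (i, m))"
  have p: "p \<in> carrier_vec m" by (simp add: p_def)
  have Mp: "(M *\<^sub>v p) $ i + b $ i = 0" if i: "i < m" for i
  proof -
    have S: "(\<Sum>k<m. A $$ (i, k) * w $ k) = - A $$ (i, m) * w $ m"
      using unit_vec_solution_row[OF A w Aw, of i] i by (simp add: eq_neg_iff_add_eq_0)
    have "(M *\<^sub>v p) $ i = (\<Sum>k<m. A $$ (i, k) * w $ k) / w $ m"
      unfolding index_mult_mat_vec_sum[OF M(1) p i]
      using i by (simp add: M_def leading_block_def p_def sum_divide_distrib)
    also have "\<dots> = - A $$ (i, m) * w $ m / w $ m"
      by (simp only: S)
    finally show ?thesis using i wm by (simp add: b_def)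
  qed
  have "cmod (vec m (\<lambda>k. v $ k) $ k) \<le> p $ k * cmod (v $ m)"
    using M p Mp metzlerD[OF metz A] eq l k
    by (intro metzler_hurwitz_resolvent_bound[of M m p b]) (auto simp: b_def M_def leading_block_def)
  then show ?thesis using k by (simp add: p_def)
qed

lemma output_unstable_eigen_last_row_bound:
  fixes v :: "complex vec" and l :: complex
  assumes A: "A \<in> carrier_mat (Suc m) (Suc m)" and metz: "metzler A" and ou: "output_unstable A"
    and w: "w \<in> carrier_vec (Suc m)" and Aw: "A *\<^sub>v w = unit_vec (Suc m) m" and l: "Re l \<ge> 0"
    and eq: "\<forall>i<m. l * v $ i = (\<Sum>k<Suc m. complex_of_real (A $$ (i, k)) * v $ k)"
  shows "cmod (\<Sum>k<m. complex_of_real (A $$ (m, k)) * v $ k) \<le> (1 / w $ m - A $$ (m, m)) * cmod (v $ m)"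
proof -
  have "cmod (\<Sum>k<m. complex_of_real (A $$ (m, k)) * v $ k)
      \<le> (\<Sum>k<m. A $$ (m, k) * (w $ k / w $ m * cmod (v $ m)))"
  proof (intro order.trans[OF norm_sum] sum_mono)
    fix k assume "k \<in> {..<m}"
    then have Amk: "A $$ (m, k) \<ge> 0" and vk: "cmod (v $ k) \<le> w $ k / w $ m * cmod (v $ m)"
      using metzlerD[OF metz A, of m k] output_unstable_eigen_bound[OF A metz ou w Aw l eq] by auto
    have "cmod (complex_of_real (A $$ (m, k)) * v $ k) = A $$ (m, k) * cmod (v $ k)"
      using Amk by (simp add: norm_mult)
    also have "\<dots> \<le> A $$ (m, k) * (w $ k / w $ m * cmod (v $ m))"
      using vk Amk by (rule mult_left_mono)
    finally show "cmod (complex_of_real (A $$ (m, k)) * v $ k) \<le> A $$ (m, k) * (w $ k / w $ m * cmod (v $ m))" .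
  qed
  also have "\<dots> = (\<Sum>k<m. A $$ (m, k) * w $ k) / w $ m * cmod (v $ m)"
    unfolding sum_divide_distrib sum_distrib_right by (rule sum.cong) auto
  also have "\<dots> = (1 / w $ m - A $$ (m, m)) * cmod (v $ m)"
    using unit_vec_solution_row[OF A w Aw, of m] output_unstable_inverse_last_pos[OF A metz ou w Aw]
    by (simp add: eq_diff_eq[symmetric] diff_divide_distrib)
  finally show ?thesis .
qed

section \<open>The linearised closed loop\<close>

lemma Re_loop_transfer_nonneg:
  fixes l :: complex and c d :: real
  assumes l: "Re l \<ge> 0" "l \<noteq> 0" and c: "c > 0" and d: "d > 0"
  shows "Re ((l + d) / (l * (l + c + d))) \<ge> 0"
proof -
  define p q where "p = 1 / l" and "q = 1 / (l + c + d)"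
  have nz: "l + c + d \<noteq> 0" "complex_of_real c + d \<noteq> 0"
    using l c d by (auto simp: complex_eq_iff)
  have "(l + d) / (l * (l + c + d)) = complex_of_real (d / (c + d)) * p + complex_of_real (c / (c + d)) * q"
    using nz l by (simp add: p_def q_def divide_simps) (simp add: algebra_simps)
  moreover have "Re p \<ge> 0" "Re q \<ge> 0"
    using l c d by (simp_all add: p_def q_def Re_complex_div_ge_0)
  ultimately show ?thesis
    using c d by simp
qed

lemma reduced_loop_characteristic_eq:
  fixes l h X Z1 Z2 :: complex and g K c d \<theta> :: real
  assumes X: "X \<noteq> 0"
    and e1: "(l + g) * X + K * Z2 = h"
    and e2: "(l + d) * Z1 + c * Z2 = 0"
    and e3: "(l + c) * Z2 + d * Z1 = \<theta> * X"
  shows "(l + g - h / X) * (l * (l + c + d)) = - (K * \<theta> * (l + d))"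
proof -
  have transfer: "l * (l + c + d) * Z2 = \<theta> * (l + d) * X"
  proof -
    have "l * (l + c + d) * Z2 - \<theta> * (l + d) * X
        = (l + d) * ((l + c) * Z2 + d * Z1 - \<theta> * X) - d * ((l + d) * Z1 + c * Z2)"
      by (simp add: algebra_simps)
    then show ?thesis using e2 e3 by simp
  qed
  have KZ2: "K * Z2 = - ((l + g - h / X) * X)"
    using e1 X by (simp add: algebra_simps)
  have "(- (K * \<theta> * (l + d))) * X = - (K * (\<theta> * (l + d) * X))" by (simp add: mult_ac)
  also have "\<dots> = - (K * Z2) * (l * (l + c + d))" using transfer by (metis mult.assoc mult.commute minus_mult_left)
  also have "\<dots> = ((l + g - h / X) * (l * (l + c + d))) * X" unfolding KZ2 by (simp add: mult_ac)
  finally show ?thesis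
    by (rule mult_right_cancel[OF X, THEN iffD1, symmetric])
qed

lemma reduced_loop_no_unstable_mode:
  fixes l h X Z1 Z2 :: complex and \<beta> g K c d \<theta> :: real
  assumes l: "Re l \<ge> 0" and pos: "c > 0" "d > 0" "K > 0" "\<theta> > 0"
    and g: "\<beta> < g" and h: "cmod h \<le> \<beta> * cmod X"
    and e1: "(l + g) * X + K * Z2 = h"
    and e2: "(l + d) * Z1 + c * Z2 = 0"
    and e3: "(l + c) * Z2 + d * Z1 = \<theta> * X"
  shows "X = 0 \<and> Z1 = 0 \<and> Z2 = 0"
proof (cases "X = 0")
  case True
  then have "h = 0" using h by simp
  with e1 True pos have "Z2 = 0" by simp
  moreover have "l + d \<noteq> 0" using l pos by (auto simp: complex_eq_iff)
  ultimately have "Z1 = 0" using e2 by simp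
  with True \<open>Z2 = 0\<close> show ?thesis by simp
next
  case False
  define D where "D = l + g - h / X"
  have "cmod h / cmod X \<le> \<beta>" using h False by (simp add: pos_divide_le_eq)
  then have "Re (h / X) \<le> \<beta>"
    using complex_Re_le_cmod[of "h / X"] by (simp add: norm_divide)
  then have ReD: "Re D > 0" using l g by (simp add: D_def)
  have char: "D * (l * (l + c + d)) = - (K * \<theta> * (l + d))"
    unfolding D_def by (rule reduced_loop_characteristic_eq[OF False e1 e2 e3])
  have "l \<noteq> 0"
  proof
    assume "l = 0"
    with char have "complex_of_real (K * \<theta> * d) = 0" by simp
    with pos show False by simp
  qed
  moreover have "l + c + d \<noteq> 0" using l pos by (auto simp: complex_eq_iff)
  ultimately have "l * (l + c + d) \<noteq> 0" by simp
  moreover have "- D * (l * (l + c + d)) = K * \<theta> * (l + d)" using char by simp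
  ultimately have "- D = K * \<theta> * (l + d) / (l * (l + c + d))"
    by (metis nonzero_mult_div_cancel_right)
  moreover define T where "T = (l + d) / (l * (l + c + d))"
  ultimately have "- D = complex_of_real (K * \<theta>) * T" by simp
  moreover have "Re T \<ge> 0"
    unfolding T_def using Re_loop_transfer_nonneg[OF l \<open>l \<noteq> 0\<close> pos(1,2)] .
  ultimately have "Re (- D) \<ge> 0" using pos by simp
  with ReD show ?thesis by simp
qed

(* The Jacobian of closed_loop at a point where kp z2 = u, kp x_n = K, kp \<eta> z1 = c and kp \<eta> z2 = d. *)
definition loop_jacobian :: "nat \<Rightarrow> real mat \<Rightarrow> real \<Rightarrow> real \<Rightarrow> real \<Rightarrow> real \<Rightarrow> real \<Rightarrow> real mat" where
  "loop_jacobian n A u K c d \<theta> = mat (n + 2) (n + 2) (\<lambda>(i, j).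
     if i < n then
       (if j < n then A $$ (i, j) - (if i = n - 1 \<and> j = n - 1 then u else 0)
        else if i = n - 1 \<and> j = n + 1 then - K else 0)
     else if j < n then (if i = n + 1 \<and> j = n - 1 then \<theta> else 0)
     else if j = n then - d else - c)"

lemma closed_loop_nth:
  assumes A: "A \<in> carrier_mat n n" and b0: "b0 \<in> carrier_vec n" and i: "i < n + 2"
  shows "closed_loop n A b0 kp \<eta> \<mu> \<theta> w $ i =
    (if i < n then (\<Sum>k<n. A $$ (i, k) * w $ k) - (if i = n - 1 then kp * w $ (n - 1) * w $ (n + 1) else 0) + b0 $ i
     else if i = n then \<mu> - kp * \<eta> * w $ n * w $ (n + 1)
     else \<theta> * w $ (n - 1) - kp * \<eta> * w $ n * w $ (n + 1))"
  unfolding closed_loop_def Let_def using i A b0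
  by (auto simp: scalar_prod_def lessThan_atLeast0 mult_ac intro!: sum.cong)

lemma has_real_derivative_line_nth:
  assumes "k < dim_vec v" and "dim_vec P = dim_vec v"
  shows "((\<lambda>t. (P + t \<cdot>\<^sub>v v) $ k) has_real_derivative v $ k) (at x)"
  using assms by (auto intro!: derivative_eq_intros)

lemma jacobian_closed_loop:
  assumes A: "A \<in> carrier_mat n n" and b0: "b0 \<in> carrier_vec n" and P: "P \<in> carrier_vec (n + 2)"
    and n: "n \<ge> 1"
  shows "jacobian (n + 2) (closed_loop n A b0 kp \<eta> \<mu> \<theta>) P =
    loop_jacobian n A (kp * P $ (n + 1)) (kp * P $ (n - 1)) (kp * \<eta> * P $ n) (kp * \<eta> * P $ (n + 1)) \<theta>"
    (is "_ = ?J")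
proof (rule eq_matI)
  fix i j assume "i < dim_row ?J" and "j < dim_col ?J"
  then have i: "i < n + 2" and j: "j < n + 2" by (auto simp: loop_jacobian_def)
  have "((\<lambda>t. closed_loop n A b0 kp \<eta> \<mu> \<theta> (P + t \<cdot>\<^sub>v unit_vec (n + 2) j) $ i) has_real_derivative ?J $$ (i, j)) (at 0)"
    unfolding closed_loop_nth[OF A b0 i] using i j n P
    by (cases "i < n"; cases "i = n"; cases "i = n - 1")
      (auto intro!: derivative_eq_intros has_real_derivative_line_nth
        simp: loop_jacobian_def if_distrib[of "\<lambda>x. x * _"] sum.delta' cong: if_cong)
  then show "jacobian (n + 2) (closed_loop n A b0 kp \<eta> \<mu> \<theta>) P $$ (i, j) = ?J $$ (i, j)"
    using i j by (simp add: jacobian_def DERIV_imp_deriv)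
qed (simp_all add: jacobian_def loop_jacobian_def)

lemma loop_jacobian_eigen_eqs:
  fixes v :: "complex vec" and l :: complex
  assumes v: "v \<in> carrier_vec (Suc m + 2)"
    and Jv: "map_mat complex_of_real (loop_jacobian (Suc m) A u K c d \<theta>) *\<^sub>v v = l \<cdot>\<^sub>v v"
  shows "\<forall>i<m. l * v $ i = (\<Sum>k<Suc m. complex_of_real (A $$ (i, k)) * v $ k)"
    and "(l + complex_of_real (u - A $$ (m, m))) * v $ m + complex_of_real K * v $ Suc (Suc m)
      = (\<Sum>k<m. complex_of_real (A $$ (m, k)) * v $ k)"
    and "(l + complex_of_real d) * v $ Suc m + complex_of_real c * v $ Suc (Suc m) = 0"
    and "(l + complex_of_real c) * v $ Suc (Suc m) + complex_of_real d * v $ Suc m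
      = complex_of_real \<theta> * v $ m"
proof -
  have J: "map_mat complex_of_real (loop_jacobian (Suc m) A u K c d \<theta>) \<in> carrier_mat (Suc m + 2) (Suc m + 2)"
    by (simp add: loop_jacobian_def)
  have row: "l * v $ i = (\<Sum>k<Suc m + 2. complex_of_real (loop_jacobian (Suc m) A u K c d \<theta> $$ (i, k)) * v $ k)"
    if "i < Suc m + 2" for i
    using arg_cong[OF Jv, of "\<lambda>x. x $ i"] index_mult_mat_vec_sum[OF J v that] that v J
    by (simp add: loop_jacobian_def)
  show "\<forall>i<m. l * v $ i = (\<Sum>k<Suc m. complex_of_real (A $$ (i, k)) * v $ k)"
    using row by (auto simp: loop_jacobian_def intro!: sum.cong)
  show "(l + complex_of_real (u - A $$ (m, m))) * v $ m + complex_of_real K * v $ Suc (Suc m)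
      = (\<Sum>k<m. complex_of_real (A $$ (m, k)) * v $ k)"
    using row[of m] by (auto simp: loop_jacobian_def algebra_simps intro!: sum.cong)
  show "(l + complex_of_real d) * v $ Suc m + complex_of_real c * v $ Suc (Suc m) = 0"
    using row[of "Suc m"] by (auto simp: loop_jacobian_def algebra_simps eq_neg_iff_add_eq_0)
  show "(l + complex_of_real c) * v $ Suc (Suc m) + complex_of_real d * v $ Suc m
      = complex_of_real \<theta> * v $ m"
    using row[of "Suc (Suc m)"] by (auto simp: loop_jacobian_def algebra_simps)
qed

lemma hurwitz_loop_jacobian:
  assumes A: "A \<in> carrier_mat (Suc m) (Suc m)" and metz: "metzler A" and ou: "output_unstable A"
    and w: "w \<in> carrier_vec (Suc m)" and Aw: "A *\<^sub>v w = unit_vec (Suc m) m"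
    and u: "u * w $ m > 1" and pos: "K > 0" "c > 0" "d > 0" "\<theta> > 0"
  shows "hurwitz (loop_jacobian (Suc m) A u K c d \<theta>)"
  unfolding hurwitz_def
proof (intro allI impI)
  fix l assume "eigenvalue (map_mat complex_of_real (loop_jacobian (Suc m) A u K c d \<theta>)) l"
  then obtain v where v: "v \<in> carrier_vec (Suc m + 2)" "v \<noteq> 0\<^sub>v (Suc m + 2)"
    and Jv: "map_mat complex_of_real (loop_jacobian (Suc m) A u K c d \<theta>) *\<^sub>v v = l \<cdot>\<^sub>v v"
    by (auto simp: eigenvalue_def eigenvector_def loop_jacobian_def)
  note eqs = loop_jacobian_eigen_eqs[OF v(1) Jv]
  show "Re l < 0"
  proof (rule ccontr)
    assume "\<not> Re l < 0"
    then have l: "Re l \<ge> 0" by simp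
    have "1 / w $ m < u"
      using u output_unstable_inverse_last_pos[OF A metz ou w Aw] by (simp add: divide_less_eq mult.commute)
    then have last: "v $ m = 0 \<and> v $ Suc m = 0 \<and> v $ Suc (Suc m) = 0"
      by (intro reduced_loop_no_unstable_mode[OF l pos(2,3,1,4) _
            output_unstable_eigen_last_row_bound[OF A metz ou w Aw l eqs(1)] eqs(2-4)]) simp
    have "v $ k = 0" if "k < m" for k
      using output_unstable_eigen_bound[OF A metz ou w Aw l eqs(1) that] last by simp
    with last have "v = 0\<^sub>v (Suc m + 2)"
      using v(1) by (intro eq_vecI) (auto simp: less_Suc_eq)
    with v(2) show False ..
  qed
qed

lemma loc_exp_stable_closed_loop:
  assumes A: "A \<in> carrier_mat (Suc m) (Suc m)" and metz: "metzler A" and ou: "output_unstable A"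
    and b0: "b0 \<in> carrier_vec (Suc m)" and w: "w \<in> carrier_vec (Suc m)"
    and Aw: "A *\<^sub>v w = unit_vec (Suc m) m" and u: "u * w $ m > 1"
    and pos: "\<eta> > 0" "kp > 0" "\<mu> > 0" "\<theta> > 0"
    and p: "p \<in> carrier_vec (Suc m + 2)" "p $ m = \<mu> / \<theta>"
      "p $ Suc m = \<mu> / (\<eta> * u)" "p $ Suc (Suc m) = u / kp"
  shows "loc_exp_stable (Suc m + 2) (closed_loop (Suc m) A b0 kp \<eta> \<mu> \<theta>) p"
proof -
  have "u > 0"
    using u output_unstable_inverse_last_pos[OF A metz ou w Aw] by (smt (verit) zero_less_mult_iff)
  then have "jacobian (Suc m + 2) (closed_loop (Suc m) A b0 kp \<eta> \<mu> \<theta>) p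
      = loop_jacobian (Suc m) A u (kp * (\<mu> / \<theta>)) (kp * \<mu> / u) (\<eta> * u) \<theta>"
    using jacobian_closed_loop[OF A b0 p(1)] p pos by simp
  then show ?thesis
    unfolding loc_exp_stable_def using pos \<open>u > 0\<close>
    by (simp add: hurwitz_loop_jacobian[OF A metz ou w Aw u])
qed

theorem mainTheorem13:
  fixes n :: nat and A Ainv :: "real mat" and b0 :: "real vec" and \<mu> \<theta> :: real
  assumes n2: "n \<ge> 2"
    and A_carr: "A \<in> carrier_mat n n"
    and metz: "metzler A"
    and ou: "output_unstable A"
    and Ainv_carr: "Ainv \<in> carrier_mat n n"
    and Ainv: "A * Ainv = 1\<^sub>m n"
    and b0_carr: "b0 \<in> carrier_vec n"
    and b0_nonneg: "\<forall>i<n. b0 $ i \<ge> 0"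
    and g0_neg: "- (unit_vec n (n - 1) \<bullet> (Ainv *\<^sub>v b0)) < 0"
    and mu_pos: "\<mu> > 0" and theta_pos: "\<theta> > 0"
  shows "\<forall>\<eta> kp. \<eta> > 0 \<longrightarrow> kp > 0 \<longrightarrow>
    (let g0 = - (unit_vec n (n - 1) \<bullet> (Ainv *\<^sub>v b0));
         r = \<mu> / \<theta>;
         gn = - (unit_vec n (n - 1) \<bullet> (Ainv *\<^sub>v unit_vec n (n - 1)));
         u = (g0 - r) / (gn * r);
         xeq = - (Ainv *\<^sub>v (b0 - (r * u) \<cdot>\<^sub>v unit_vec n (n - 1)));
         p = vec (n + 2) (\<lambda>i. if i < n then xeq $ i
                              else if i = n then \<mu> / (\<eta> * u) else u / kp)
     in loc_exp_stable (n + 2) (closed_loop n A b0 kp \<eta> \<mu> \<theta>) p)"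
(* b0_nonneg concerns positivity of the equilibrium only; stability does not need it. *)
proof -
  obtain m where n: "n = Suc m" using n2 by (cases n) auto
  define e :: "real vec" where "e = unit_vec n (n - 1)"
  define w where "w = Ainv *\<^sub>v e"
  define r where "r = \<mu> / \<theta>"
  define u where "u = (- (Ainv *\<^sub>v b0) $ m - r) / (- w $ m * r)"
  define xeq where "xeq = - (Ainv *\<^sub>v (b0 - (r * u) \<cdot>\<^sub>v e))"
  have A: "A \<in> carrier_mat (Suc m) (Suc m)" and b0: "b0 \<in> carrier_vec (Suc m)"
    and w: "w \<in> carrier_vec (Suc m)"
    using A_carr b0_carr Ainv_carr by (simp_all add: n w_def e_def)
  have Aw: "A *\<^sub>v w = unit_vec (Suc m) m"
    using Ainv_carr A_carr by (simp add: w_def e_def n assoc_mult_mat_vec[symmetric] Ainv)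
  have dot: "e \<bullet> (Ainv *\<^sub>v b0) = (Ainv *\<^sub>v b0) $ m" "e \<bullet> w = w $ m"
    using Ainv_carr b0_carr by (simp_all add: n e_def w_def)
  have wm: "w $ m > 0" by (rule output_unstable_inverse_last_pos[OF A metz ou w Aw])
  have r: "r > 0" using mu_pos theta_pos by (simp add: r_def)
  have uw: "u * w $ m = 1 + (Ainv *\<^sub>v b0) $ m / r"
    using wm r by (simp add: u_def field_simps)
  then have u: "u * w $ m > 1" using g0_neg[folded e_def, unfolded dot] r by simp
  have "xeq $ m = r * (u * w $ m) - (Ainv *\<^sub>v b0) $ m"
    using Ainv_carr b0_carr by (simp add: xeq_def w_def e_def n mult_minus_distrib_mat_vec mult_mat_vec)
  then have "xeq $ m = r"
    using r by (simp add: uw algebra_simps)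
  then have "loc_exp_stable (n + 2) (closed_loop n A b0 kp \<eta> \<mu> \<theta>)
      (vec (n + 2) (\<lambda>i. if i < n then xeq $ i else if i = n then \<mu> / (\<eta> * u) else u / kp))"
    if "\<eta> > 0" "kp > 0" for \<eta> kp
    using loc_exp_stable_closed_loop[OF A metz ou b0 w Aw u that mu_pos theta_pos] by (simp add: n r_def)
  then show ?thesis
    unfolding Let_def e_def[symmetric] w_def[symmetric] dot r_def[symmetric] u_def[symmetric]
      xeq_def[symmetric] by blast
qed

end
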